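(* Let $H=\{a_1,\dots,a_7\}$, let $\mathcal R$ be the equivalence relation on $H$ with classes $\{a_1,a_2,a_3\}$ and $\{a_4,a_5,a_6,a_7\}$, let $\mathcal Q$ be the equivalence relation with classes $\{a_1,a_2,a_4,a_5\}$ and $\{a_3,a_6,a_7\}$, and let $\mathcal H=(H;\mathcal R,\mathcal Q,C_{a_1},\dots,C_{a_7})$ with $C_{a}=\{a\}$. Then $\mathcal H$ is $2$-rigid and strongly $2$-rectangular, but not congruence $2$-permutable; in particular $(a_1,a_6)\in\mathcal R\circ_2\mathcal Q$ while $(a_1,a_6)\notin\mathcal Q\circ_2\mathcal R$.
   Context: $\langle\mathcal H\rangle_2$: relations defined by $\exists^{\equiv2}\mathbf y_1\cdots\exists^{\equiv2}\mathbf y_s\,\Phi$ with $\Phi$ a conjunction of atomic formulas over relations of $\mathcal H$ and equality, where $\exists^{\equiv2}\mathbf y\,\Psi(\mathbf x,\mathbf y)$ holds at $\mathbf a$ iff the number of $\mathbf b$ with $\Psi(\mathbf a,\mathbf b)$ is odd. Strongly $2$-rectangular: every relation of arity $\ge2$ in $\langle\mathcal H\rangle_2$ is rectangular (for every split of coordinates into two nonempty parts, $(\mathbf a,\mathbf c),(\mathbf a,\mathbf d),(\mathbf b,\mathbf c)\in\mathcal S$ implies $(\mathbf b,\mathbf d)\in\mathcal S$). For binary relations, $(\mathbf a,\mathbf b)\in\alpha\circ_2\beta$ iff the number of $\mathbf c$ with $(\mathbf a,\mathbf c)\in\alpha,(\mathbf c,\mathbf b)\in\beta$ is odd. A $2$-congruence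 of $\mathcal S\in\langle\mathcal H\rangle_2$ is an equivalence relation on $\mathcal S$ belonging to $\langle\mathcal H\rangle_2$; $\mathcal H$ is congruence $2$-permutable if $\alpha\circ_2\beta=\beta\circ_2\alpha$ for all $2$-congruences $\alpha,\beta$ of every $\mathcal S\in\langle\mathcal H\rangle_2$. $2$-rigid: no automorphism of order 2. *)

theory Defs
  imports Main
begin

text \<open>Relational structures: a carrier set A and a list of relations, each
a set of tuples (lists) over A.  Relation number i of the structure is Rs ! i.\<close>

datatype atom = Rel nat "nat list" | Eq nat nat

text \<open>A primitive positive (conjunctive) formula is a list of atoms over
variables (natural numbers).\<close>

fun atom_vars :: "atom \<Rightarrow> nat set" where
  "atom_vars (Rel i vs) = set vs"
| "atom_vars (Eq i j) = {i, j}"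

definition fvars :: "atom list \<Rightarrow> nat set" where
  "fvars \<Phi> = (\<Union>a\<in>set \<Phi>. atom_vars a)"

fun sat_atom :: "'a list set list \<Rightarrow> (nat \<Rightarrow> 'a) \<Rightarrow> atom \<Rightarrow> bool" where
  "sat_atom Rs \<sigma> (Rel i vs) = (i < length Rs \<and> map \<sigma> vs \<in> Rs ! i)"
| "sat_atom Rs \<sigma> (Eq i j) = (\<sigma> i = \<sigma> j)"

definition sat :: "'a list set list \<Rightarrow> (nat \<Rightarrow> 'a) \<Rightarrow> atom list \<Rightarrow> bool" where
  "sat Rs \<sigma> \<Phi> = (\<forall>a\<in>set \<Phi>. sat_atom Rs \<sigma> a)"

text \<open>The list ks gives the lengths of the
quantified tuples y_1, ..., y_s; the values of all variables already bound
(first the free ones, then y_1, y_2, ...) are in the list as, variable v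
being as ! v.\<close>

fun peval :: "'a set \<Rightarrow> 'a list set list \<Rightarrow> atom list \<Rightarrow> nat list \<Rightarrow> 'a list \<Rightarrow> bool" where
  "peval A Rs \<Phi> [] as = sat Rs (\<lambda>v. as ! v) \<Phi>"
| "peval A Rs \<Phi> (k # ks) as =
     odd (card {bs. length bs = k \<and> set bs \<subseteq> A \<and> peval A Rs \<Phi> ks (as @ bs)})"

text \<open>The n-ary relations of \<langle>H\<rangle>_2: defined by
\<exists>^{\<equiv>2} y_1 ... \<exists>^{\<equiv>2} y_s \<Phi>(x_1..x_n, y_1..y_s).\<close>

definition clone2 :: "'a set \<Rightarrow> 'a list set list \<Rightarrow> nat \<Rightarrow> 'a list set \<Rightarrow> bool" where
  "clone2 A Rs n S \<longleftrightarrow>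
     (\<exists>\<Phi> ks. fvars \<Phi> \<subseteq> {..<n + sum_list ks} \<and>
        S = {as. length as = n \<and> set as \<subseteq> A \<and> peval A Rs \<Phi> ks as})"

definition mix :: "nat \<Rightarrow> nat set \<Rightarrow> 'a list \<Rightarrow> 'a list \<Rightarrow> 'a list" where
  "mix n I x y = map (\<lambda>i. if i \<in> I then x ! i else y ! i) [0..<n]"

definition rectangular :: "nat \<Rightarrow> 'a list set \<Rightarrow> bool" where
  "rectangular n S \<longleftrightarrow>
     (\<forall>I. I \<subseteq> {..<n} \<and> I \<noteq> {} \<and> I \<noteq> {..<n} \<longrightarrow>
       (\<forall>a b c d. length a = n \<and> length b = n \<and> length c = n \<and> length d = n \<longrightarrow>
          mix n I a c \<in> S \<longrightarrow> mix n I a d \<in> S \<longrightarrow> mix n I b c \<in> S \<longrightarrow> mix n I b d \<in> S))"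

definition strongly_2_rectangular :: "'a set \<Rightarrow> 'a list set list \<Rightarrow> bool" where
  "strongly_2_rectangular A Rs \<longleftrightarrow>
     (\<forall>n S. n \<ge> 2 \<longrightarrow> clone2 A Rs n S \<longrightarrow> rectangular n S)"

definition comp2 :: "('b \<times> 'b) set \<Rightarrow> ('b \<times> 'b) set \<Rightarrow> ('b \<times> 'b) set" where
  "comp2 \<alpha> \<beta> = {(a, b). odd (card {c. (a, c) \<in> \<alpha> \<and> (c, b) \<in> \<beta>})}"

text \<open>A binary relation on n-tuples is represented in \<langle>H\<rangle>_2 as a
2n-ary relation (concatenation of the two tuples).\<close>

definition tuple_pairs :: "nat \<Rightarrow> 'a list set \<Rightarrow> ('a list \<times> 'a list) set" where
  "tuple_pairs n T = {(take n l, drop n l) | l. l \<in> T}"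

definition cong2 :: "'a set \<Rightarrow> 'a list set list \<Rightarrow> nat \<Rightarrow> 'a list set \<Rightarrow> ('a list \<times> 'a list) set \<Rightarrow> bool" where
  "cong2 A Rs n S \<alpha> \<longleftrightarrow>
     equiv S \<alpha> \<and> clone2 A Rs (2 * n) {a @ b | a b. (a, b) \<in> \<alpha>}"

definition cong_2_permutable :: "'a set \<Rightarrow> 'a list set list \<Rightarrow> bool" where
  "cong_2_permutable A Rs \<longleftrightarrow>
     (\<forall>n S. clone2 A Rs n S \<longrightarrow>
        (\<forall>\<alpha> \<beta>. cong2 A Rs n S \<alpha> \<and> cong2 A Rs n S \<beta> \<longrightarrow> comp2 \<alpha> \<beta> = comp2 \<beta> \<alpha>))"

definition automorphism :: "'a set \<Rightarrow> 'a list set list \<Rightarrow> ('a \<Rightarrow> 'a) \<Rightarrow> bool" where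
  "automorphism A Rs f \<longleftrightarrow>
     bij_betw f A A \<and> (\<forall>R\<in>set Rs. \<forall>t. set t \<subseteq> A \<longrightarrow> (map f t \<in> R \<longleftrightarrow> t \<in> R))"

definition rigid2 :: "'a set \<Rightarrow> 'a list set list \<Rightarrow> bool" where
  "rigid2 A Rs \<longleftrightarrow>
     \<not> (\<exists>f. automorphism A Rs f \<and> (\<exists>x\<in>A. f x \<noteq> x) \<and> (\<forall>x\<in>A. f (f x) = x))"

text \<open>The concrete structure: a_i is the natural number i, H = {1..7}.\<close>

definition H7 :: "nat set" where "H7 = {1..7}"

definition Rp :: "(nat \<times> nat) set" where
  "Rp = {(x, y). (x \<in> {1,2,3} \<and> y \<in> {1,2,3}) \<or> (x \<in> {4,5,6,7} \<and> y \<in> {4,5,6,7})}"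

definition Qp :: "(nat \<times> nat) set" where
  "Qp = {(x, y). (x \<in> {1,2,4,5} \<and> y \<in> {1,2,4,5}) \<or> (x \<in> {3,6,7} \<and> y \<in> {3,6,7})}"

definition bin_rel :: "(nat \<times> nat) set \<Rightarrow> nat list set" where
  "bin_rel P = {[x, y] | x y. (x, y) \<in> P}"

definition Hrels :: "nat list set list" where
  "Hrels = [bin_rel Rp, bin_rel Qp] @ map (\<lambda>a. {[a]}) [1..<8]"

end

theory Submission
  imports Defs
begin

(* Rigidity comes from the constants C_a.  For strong 2-rectangularity one shows that every
   relation of <H>_2 is already definable with ordinary existential quantifiers.  The permutation
   (a1 a2)(a4 a5)(a6 a7) fixes only a3 and keeps every element in its R-class and in its Q-class.
   Applying it to the quantified variables that are not pinned (linked by equalities to a free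
   variable or to a constant) is therefore an involution on the solutions of the quantifier-free
   part; its fixed points are the solutions in which all unpinned variables equal a3, and there is
   at most one of those.  So the number of solutions is odd iff such a solution exists.  Since R
   and Q are equivalence relations, the resulting relations are closed under the partial operation
   m(x,y,z) = (if x = y then z else y), defined where x is y or z, and this operation completes
   every rectangle.  Permutability fails for the 2-congruences R and Q on H itself: a1 reaches a6
   along one R-Q path (via a3) but along two Q-R paths (via a4 and a5). *)

lemma even_card_moved_by_involution:
  assumes "finite A" and maps: "\<And>x. x \<in> A \<Longrightarrow> f x \<in> A" and inv: "\<And>x. x \<in> A \<Longrightarrow> f (f x) = x"
  shows "even (card {x\<in>A. f x \<noteq> x})"
proof -
  define M where "M = {x\<in>A. f x \<noteq> x}"
  have orbits: "M = \<Union>((\<lambda>x. {x, f x}) ` M)"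
    using maps inv by (auto simp: M_def)
  have "2 dvd card (\<Union>((\<lambda>x. {x, f x}) ` M))"
  proof (rule dvd_partition)
    show "finite (\<Union>((\<lambda>x. {x, f x}) ` M))" using orbits \<open>finite A\<close> by (simp add: M_def)
    show "\<forall>c\<in>(\<lambda>x. {x, f x}) ` M. 2 dvd card c" by (auto simp: M_def)
    show "\<forall>c1\<in>(\<lambda>x. {x, f x}) ` M. \<forall>c2\<in>(\<lambda>x. {x, f x}) ` M. c1 \<noteq> c2 \<longrightarrow> c1 \<inter> c2 = {}"
      by (auto simp: M_def) (metis inv)+
  qed
  then show ?thesis using orbits by (simp add: M_def)
qed

lemma finite_lists_length_eq_subset:
  "finite A \<Longrightarrow> finite {xs. length xs = k \<and> set xs \<subseteq> A \<and> P xs}"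
  by (rule finite_subset[OF _ finite_lists_length_eq[of A k]]) auto

lemma card_lists_append_split:
  assumes "finite A"
  shows "card {bs. length bs = k + m \<and> set bs \<subseteq> A \<and> P bs}
       = (\<Sum>b | length b = k \<and> set b \<subseteq> A. card {c. length c = m \<and> set c \<subseteq> A \<and> P (b @ c)})"
proof -
  let ?B = "{b. length b = k \<and> set b \<subseteq> A}"
  let ?C = "\<lambda>b. {c. length c = m \<and> set c \<subseteq> A \<and> P (b @ c)}"
  have "{bs. length bs = k + m \<and> set bs \<subseteq> A \<and> P bs} = (\<lambda>(b, c). b @ c) ` Sigma ?B ?C"
  proof (intro equalityI subsetI)
    fix bs assume "bs \<in> {bs. length bs = k + m \<and> set bs \<subseteq> A \<and> P bs}"
    then have "(take k bs, drop k bs) \<in> Sigma ?B ?C"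
      by (auto dest: in_set_takeD in_set_dropD)
    then show "bs \<in> (\<lambda>(b, c). b @ c) ` Sigma ?B ?C"
      by (metis (no_types, lifting) append_take_drop_id case_prod_conv image_eqI)
  next
    fix bs assume "bs \<in> (\<lambda>(b, c). b @ c) ` Sigma ?B ?C"
    then show "bs \<in> {bs. length bs = k + m \<and> set bs \<subseteq> A \<and> P bs}" by auto
  qed
  moreover have "inj_on (\<lambda>(b, c). b @ c) (Sigma ?B ?C)"
  proof (rule inj_onI)
    fix p q assume "p \<in> Sigma ?B ?C" "q \<in> Sigma ?B ?C" "(\<lambda>(b, c). b @ c) p = (\<lambda>(b, c). b @ c) q"
    then show "p = q" by (cases p; cases q) (simp add: append_eq_append_conv)
  qed
  moreover have "finite ?B" "\<And>b. finite (?C b)"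
    using finite_lists_length_eq_subset[OF assms, where P = "\<lambda>_. True"]
      finite_lists_length_eq_subset[OF assms] by simp_all
  ultimately show ?thesis
    by (simp add: card_image)
qed

lemma peval_iff_odd_card_sat:
  assumes "finite A"
  shows "peval A Rs \<Phi> ks as \<longleftrightarrow>
    odd (card {bs. length bs = sum_list ks \<and> set bs \<subseteq> A \<and> sat Rs (\<lambda>v. (as @ bs) ! v) \<Phi>})"
proof (induction ks arbitrary: as)
  case Nil
  have "{bs. length bs = 0 \<and> set bs \<subseteq> A \<and> sat Rs (\<lambda>v. (as @ bs) ! v) \<Phi>}
        = (if sat Rs (\<lambda>v. as ! v) \<Phi> then {[]} else {})" by auto
  then show ?case by simp
next
  case (Cons k ks)
  let ?B = "{b. length b = k \<and> set b \<subseteq> A}"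
  let ?c = "\<lambda>b. card {c. length c = sum_list ks \<and> set c \<subseteq> A \<and> sat Rs (\<lambda>v. (as @ b @ c) ! v) \<Phi>}"
  have "finite ?B" using finite_lists_length_eq_subset[OF assms, where P = "\<lambda>_. True"] by simp
  then have "odd (sum ?c ?B) \<longleftrightarrow> odd (card {b \<in> ?B. odd (?c b)})"
    by (simp add: even_sum_iff)
  then show ?case
    by (simp add: Cons.IH card_lists_append_split[OF assms, where P = "\<lambda>bs. sat Rs (\<lambda>v. (as @ bs) ! v) \<Phi>"]
        conj_assoc)
qed

lemma sat_atom_cong:
  assumes "\<And>v. v \<in> atom_vars a \<Longrightarrow> \<sigma> v = \<sigma>' v"
  shows "sat_atom Rs \<sigma> a \<longleftrightarrow> sat_atom Rs \<sigma>' a"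
  using assms by (cases a) (simp_all cong: map_cong)

lemma sat_cong:
  assumes "\<And>v. v \<in> fvars \<Phi> \<Longrightarrow> \<sigma> v = \<sigma>' v"
  shows "sat Rs \<sigma> \<Phi> \<longleftrightarrow> sat Rs \<sigma>' \<Phi>"
proof -
  have "sat_atom Rs \<sigma> a \<longleftrightarrow> sat_atom Rs \<sigma>' a" if "a \<in> set \<Phi>" for a
    using that assms by (intro sat_atom_cong) (auto simp: fvars_def)
  then show ?thesis by (simp add: sat_def)
qed

definition fourth_corner :: "'a \<Rightarrow> 'a \<Rightarrow> 'a \<Rightarrow> 'a" where
  "fourth_corner x y z = (if x = y then z else y)"

definition fourth_corner_list :: "'a list \<Rightarrow> 'a list \<Rightarrow> 'a list \<Rightarrow> 'a list" where
  "fourth_corner_list xs ys zs = map (\<lambda>k. fourth_corner (xs ! k) (ys ! k) (zs ! k)) [0..<length xs]"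

lemma length_fourth_corner_list [simp]: "length (fourth_corner_list xs ys zs) = length xs"
  by (simp add: fourth_corner_list_def)

lemma nth_fourth_corner_list [simp]:
  "k < length xs \<Longrightarrow> fourth_corner_list xs ys zs ! k = fourth_corner (xs ! k) (ys ! k) (zs ! k)"
  by (simp add: fourth_corner_list_def)

lemma fourth_corner_list_Nil [simp]: "fourth_corner_list [] ys zs = []"
  by (simp add: fourth_corner_list_def)

lemma fourth_corner_list_Cons [simp]:
  "fourth_corner_list (x # xs) (y # ys) (z # zs) = fourth_corner x y z # fourth_corner_list xs ys zs"
  by (simp add: fourth_corner_list_def upt_conv_Cons map_Suc_upt[symmetric] del: upt_Suc)

lemma fourth_corner_list_append:
  assumes "length xs' = length xs" "length xs'' = length xs"
  shows "fourth_corner_list (xs @ ys) (xs' @ ys') (xs'' @ ys'')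
       = fourth_corner_list xs xs' xs'' @ fourth_corner_list ys ys' ys''"
  using assms by (auto intro!: nth_equalityI simp: nth_append)

lemma set_fourth_corner_list:
  assumes "length ys = length xs" "length zs = length xs"
  shows "set (fourth_corner_list xs ys zs) \<subseteq> set ys \<union> set zs"
  using assms by (auto simp: fourth_corner_list_def fourth_corner_def)

definition fourth_corner_closed :: "'a list set \<Rightarrow> bool" where
  "fourth_corner_closed R \<longleftrightarrow>
     (\<forall>xs\<in>R. \<forall>ys\<in>R. \<forall>zs\<in>R. length ys = length xs \<longrightarrow> length zs = length xs \<longrightarrow>
        (\<forall>j<length xs. xs ! j = ys ! j \<or> xs ! j = zs ! j) \<longrightarrow> fourth_corner_list xs ys zs \<in> R)"

lemma fourth_corner_closedD:
  assumes "fourth_corner_closed R" "xs \<in> R" "ys \<in> R" "zs \<in> R"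
    "length ys = length xs" "length zs = length xs" "\<And>j. j < length xs \<Longrightarrow> xs ! j = ys ! j \<or> xs ! j = zs ! j"
  shows "fourth_corner_list xs ys zs \<in> R"
  using assms unfolding fourth_corner_closed_def by blast

lemma rectangular_if_fourth_corner_closed:
  assumes closed: "fourth_corner_closed S"
  shows "rectangular n S"
  unfolding rectangular_def
proof (intro allI impI)
  fix I and a b c d :: "'a list"
  assume "mix n I a c \<in> S" "mix n I a d \<in> S" "mix n I b c \<in> S"
  then have "fourth_corner_list (mix n I a c) (mix n I a d) (mix n I b c) \<in> S"
    by (rule fourth_corner_closedD[OF closed]) (auto simp: mix_def)
  moreover have "fourth_corner_list (mix n I a c) (mix n I a d) (mix n I b c) = mix n I b d"
    by (auto intro!: nth_equalityI simp: mix_def fourth_corner_def)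
  ultimately show "mix n I b d \<in> S" by simp
qed

lemma fourth_corner_closed_bin_rel:
  assumes "sym P" "trans P"
  shows "fourth_corner_closed (bin_rel P)"
  unfolding fourth_corner_closed_def bin_rel_def
  using assms by (auto simp: fourth_corner_def All_less_Suc) (meson symD transD)+

lemma fourth_corner_closed_singleton: "fourth_corner_closed {[a]}"
  by (simp add: fourth_corner_closed_def fourth_corner_def)

lemma sat_fourth_corner:
  assumes closed: "\<forall>R\<in>set Rs. fourth_corner_closed R"
    and sat: "sat Rs \<sigma> \<Phi>" "sat Rs \<sigma>' \<Phi>" "sat Rs \<sigma>'' \<Phi>"
    and agree: "\<And>v. v \<in> fvars \<Phi> \<Longrightarrow> \<sigma> v = \<sigma>' v \<or> \<sigma> v = \<sigma>'' v"
  shows "sat Rs (\<lambda>v. fourth_corner (\<sigma> v) (\<sigma>' v) (\<sigma>'' v)) \<Phi>"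
  unfolding sat_def
proof
  fix a assume a: "a \<in> set \<Phi>"
  have sat_a: "sat_atom Rs \<sigma> a" "sat_atom Rs \<sigma>' a" "sat_atom Rs \<sigma>'' a"
    using sat a by (simp_all add: sat_def)
  have agree_a: "\<sigma> v = \<sigma>' v \<or> \<sigma> v = \<sigma>'' v" if "v \<in> atom_vars a" for v
    using agree a that by (auto simp: fvars_def)
  show "sat_atom Rs (\<lambda>v. fourth_corner (\<sigma> v) (\<sigma>' v) (\<sigma>'' v)) a"
  proof (cases a)
    case (Rel i vs)
    then have "fourth_corner_list (map \<sigma> vs) (map \<sigma>' vs) (map \<sigma>'' vs) \<in> Rs ! i"
      using sat_a agree_a closed by (intro fourth_corner_closedD) auto
    moreover have "fourth_corner_list (map \<sigma> vs) (map \<sigma>' vs) (map \<sigma>'' vs)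
                 = map (\<lambda>v. fourth_corner (\<sigma> v) (\<sigma>' v) (\<sigma>'' v)) vs"
      by (auto intro: nth_equalityI)
    ultimately show ?thesis using sat_a Rel by simp
  next
    case (Eq i j)
    then show ?thesis using sat_a by (simp add: fourth_corner_def)
  qed
qed

definition singleton_pairs :: "('a \<times> 'a) set \<Rightarrow> ('a list \<times> 'a list) set" where
  "singleton_pairs P = {([x], [y]) | x y. (x, y) \<in> P}"

lemma equiv_singleton_pairs:
  assumes "equiv A P"
  shows "equiv {as. length as = 1 \<and> set as \<subseteq> A} (singleton_pairs P)"
proof (rule equivI)
  have P: "P \<subseteq> A \<times> A" "refl_on A P" "sym P" "trans P" using assms by (simp_all add: equiv_def)
  show "singleton_pairs P \<subseteq> {as. length as = 1 \<and> set as \<subseteq> A} \<times> {as. length as = 1 \<and> set as \<subseteq> A}"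
    using P(1) by (auto simp: singleton_pairs_def)
  show "refl_on {as. length as = 1 \<and> set as \<subseteq> A} (singleton_pairs P)"
    using P(2) by (auto simp: refl_on_def singleton_pairs_def length_Suc_conv)
  show "sym (singleton_pairs P)"
    using P(3) by (auto simp: singleton_pairs_def intro!: symI dest: symD)
  show "trans (singleton_pairs P)"
    using P(4) by (auto simp: singleton_pairs_def intro!: transI dest: transD)
qed

lemma clone2_all_tuples: "clone2 A Rs n {as. length as = n \<and> set as \<subseteq> A}"
  unfolding clone2_def by (rule exI[of _ "[]"], rule exI[of _ "[]"]) (simp add: fvars_def sat_def)

lemma clone2_singleton_pairs:
  assumes "i < length Rs" "Rs ! i = bin_rel P" "P \<subseteq> A \<times> A"
  shows "clone2 A Rs 2 {a @ b | a b. (a, b) \<in> singleton_pairs P}"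
  unfolding clone2_def
proof (intro exI conjI)
  show "fvars [Rel i [0, 1]] \<subseteq> {..<2 + sum_list []}" by (auto simp: fvars_def)
  show "{a @ b | a b. (a, b) \<in> singleton_pairs P} =
    {as. length as = 2 \<and> set as \<subseteq> A \<and> peval A Rs [Rel i [0, 1]] [] as}"
    using assms by (auto simp: singleton_pairs_def bin_rel_def sat_def numeral_2_eq_2 length_Suc_conv)
      (metis append_Cons append_Nil)
qed

lemma singleton_pairs_comp2_iff:
  "([x], [y]) \<in> comp2 (singleton_pairs P) (singleton_pairs P') \<longleftrightarrow> (x, y) \<in> comp2 P P'"
proof -
  have "{c. ([x], c) \<in> singleton_pairs P \<and> (c, [y]) \<in> singleton_pairs P'}
      = (\<lambda>z. [z]) ` {c. (x, c) \<in> P \<and> (c, y) \<in> P'}"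
    by (auto simp: singleton_pairs_def)
  moreover have "card ((\<lambda>z. [z]) ` C) = card C" for C :: "'a set"
    by (rule card_image) (auto intro: inj_onI)
  ultimately show ?thesis by (simp add: comp2_def)
qed

lemma not_cong_2_permutable_if_comp2:
  assumes "i < length Rs" "Rs ! i = bin_rel P" "equiv A P"
    and "j < length Rs" "Rs ! j = bin_rel P'" "equiv A P'"
    and "(x, y) \<in> comp2 P P'" "(x, y) \<notin> comp2 P' P"
  shows "\<not> cong_2_permutable A Rs"
proof
  let ?S = "{as. length as = 1 \<and> set as \<subseteq> A}"
  assume "cong_2_permutable A Rs"
  moreover have "cong2 A Rs 1 ?S (singleton_pairs Q)"
    if "k < length Rs" "Rs ! k = bin_rel Q" "equiv A Q" for k Q
    unfolding cong2_def using that equiv_singleton_pairs clone2_singleton_pairs[of k Rs Q A]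
    by (simp add: equiv_type)
  ultimately have
    "comp2 (singleton_pairs P) (singleton_pairs P') = comp2 (singleton_pairs P') (singleton_pairs P)"
    using assms clone2_all_tuples unfolding cong_2_permutable_def by blast
  then show False
    using assms(7,8) by (metis singleton_pairs_comp2_iff)
qed

lemma rigid2_if_constants:
  assumes "\<And>a. a \<in> A \<Longrightarrow> {[a]} \<in> set Rs"
  shows "rigid2 A Rs"
proof -
  have "f a = a" if f: "automorphism A Rs f" and a: "a \<in> A" for f a
  proof -
    have "\<forall>R\<in>set Rs. \<forall>t. set t \<subseteq> A \<longrightarrow> (map f t \<in> R) = (t \<in> R)"
      using f by (simp add: automorphism_def)
    from this[rule_format, OF assms[OF a], of "[a]"] show "f a = a" using a by simp
  qed
  then show ?thesis unfolding rigid2_def by blast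
qed

lemma finite_H7: "finite H7"
  by (simp add: H7_def)

lemma equiv_H7_Rp: "equiv H7 Rp"
  by (auto simp: equiv_def refl_on_def sym_def trans_def Rp_def H7_def)

lemma equiv_H7_Qp: "equiv H7 Qp"
  by (auto simp: equiv_def refl_on_def sym_def trans_def Qp_def H7_def)

lemma nth_Hrels_constant: "2 \<le> i \<Longrightarrow> i < 9 \<Longrightarrow> Hrels ! i = {[i - 1]}"
  by (simp add: Hrels_def nth_append) (subst nth_upt; simp)

lemma sat_atom_Hrels_Rel:
  "sat_atom Hrels \<sigma> (Rel i vs) \<longleftrightarrow>
     (i = 0 \<and> (\<exists>u w. vs = [u, w] \<and> (\<sigma> u, \<sigma> w) \<in> Rp))
   \<or> (i = 1 \<and> (\<exists>u w. vs = [u, w] \<and> (\<sigma> u, \<sigma> w) \<in> Qp))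
   \<or> (2 \<le> i \<and> i < 9 \<and> (\<exists>u. vs = [u] \<and> \<sigma> u = i - 1))"
proof (cases "i < 2")
  case True
  then show ?thesis
    by (auto simp: Hrels_def bin_rel_def less_2_cases_iff map_eq_Cons_conv)
next
  case False
  then show ?thesis
    by (auto simp: nth_Hrels_constant map_eq_Cons_conv Hrels_def)
qed

lemma constant_in_Hrels: "a \<in> H7 \<Longrightarrow> {[a]} \<in> set Hrels"
  by (simp add: Hrels_def H7_def)

lemma fourth_corner_closed_Hrels: "\<forall>R\<in>set Hrels. fourth_corner_closed R"
  using equiv_H7_Rp equiv_H7_Qp
  by (auto simp: Hrels_def equiv_def fourth_corner_closed_bin_rel fourth_corner_closed_singleton)

definition swap_pairs :: "nat \<Rightarrow> nat" where
  "swap_pairs x = (if x = 1 then 2 else if x = 2 then 1 else if x = 4 then 5 else if x = 5 then 4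
     else if x = 6 then 7 else if x = 7 then 6 else x)"

lemma swap_pairs_swap_pairs [simp]: "swap_pairs (swap_pairs x) = x"
  by (simp add: swap_pairs_def)

lemma swap_pairs_in_H7_iff [simp]: "swap_pairs x \<in> H7 \<longleftrightarrow> x \<in> H7"
  by (auto simp: swap_pairs_def H7_def)

lemma swap_pairs_eq_self_iff: "x \<in> H7 \<Longrightarrow> swap_pairs x = x \<longleftrightarrow> x = 3"
  by (auto simp: swap_pairs_def H7_def)

lemma swap_pairs_Rp_iff [simp]:
  "(swap_pairs x, y) \<in> Rp \<longleftrightarrow> (x, y) \<in> Rp" "(x, swap_pairs y) \<in> Rp \<longleftrightarrow> (x, y) \<in> Rp"
  by (auto simp: swap_pairs_def Rp_def)

lemma swap_pairs_Qp_iff [simp]: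
  "(swap_pairs x, y) \<in> Qp \<longleftrightarrow> (x, y) \<in> Qp" "(x, swap_pairs y) \<in> Qp \<longleftrightarrow> (x, y) \<in> Qp"
  by (auto simp: swap_pairs_def Qp_def)

(* Relations 2, ..., 8 of Hrels are the constants C_a1, ..., C_a7. *)
inductive pinned :: "atom list \<Rightarrow> nat \<Rightarrow> nat \<Rightarrow> bool" for \<Phi> :: "atom list" and n :: nat where
  free: "v < n \<Longrightarrow> pinned \<Phi> n v"
| const: "Rel i [v] \<in> set \<Phi> \<Longrightarrow> 2 \<le> i \<Longrightarrow> pinned \<Phi> n v"
| eq_left: "Eq i j \<in> set \<Phi> \<Longrightarrow> pinned \<Phi> n i \<Longrightarrow> pinned \<Phi> n j"
| eq_right: "Eq i j \<in> set \<Phi> \<Longrightarrow> pinned \<Phi> n j \<Longrightarrow> pinned \<Phi> n i"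

lemma pinned_agree:
  assumes "pinned \<Phi> n v" and sat: "sat Hrels \<sigma> \<Phi>" "sat Hrels \<sigma>' \<Phi>" "sat Hrels \<sigma>'' \<Phi>"
    and "\<forall>j<n. \<sigma> j = \<sigma>' j \<or> \<sigma> j = \<sigma>'' j"
  shows "\<sigma> v = \<sigma>' v \<or> \<sigma> v = \<sigma>'' v"
  using assms(1)
proof induction
  case (free v)
  then show ?case using assms(5) by blast
next
  case (const i v)
  then have "sat_atom Hrels \<tau> (Rel i [v])" if "sat Hrels \<tau> \<Phi>" for \<tau>
    using that by (simp add: sat_def del: sat_atom.simps)
  then have "\<tau> v = i - 1" if "sat Hrels \<tau> \<Phi>" for \<tau>
    using that const(2) unfolding sat_atom_Hrels_Rel by auto
  then show ?case using sat by metis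
next
  case (eq_left i j)
  then show ?case using sat by (fastforce simp: sat_def)
next
  case (eq_right i j)
  then show ?case using sat by (fastforce simp: sat_def)
qed

definition unpinned :: "atom list \<Rightarrow> nat \<Rightarrow> nat \<Rightarrow> nat set" where
  "unpinned \<Phi> n K = {v. n \<le> v \<and> v < n + K \<and> \<not> pinned \<Phi> n v}"

lemma in_unpinned_iff: "v < n + K \<Longrightarrow> v \<in> unpinned \<Phi> n K \<longleftrightarrow> \<not> pinned \<Phi> n v"
  by (auto simp: unpinned_def intro: pinned.free)

lemma sat_swap_unpinned:
  assumes fv: "fvars \<Phi> \<subseteq> {..<n + K}" and sat: "sat Hrels \<sigma> \<Phi>"
  shows "sat Hrels (\<lambda>v. if v \<in> unpinned \<Phi> n K then swap_pairs (\<sigma> v) else \<sigma> v) \<Phi>"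
  unfolding sat_def
proof
  fix a assume a: "a \<in> set \<Phi>"
  let ?U = "unpinned \<Phi> n K"
  have sat_a: "sat_atom Hrels \<sigma> a" using sat a by (simp add: sat_def)
  show "sat_atom Hrels (\<lambda>v. if v \<in> ?U then swap_pairs (\<sigma> v) else \<sigma> v) a"
  proof (cases a)
    case (Rel i vs)
    have "v \<notin> ?U" if "vs = [v]" "2 \<le> i" for v
      using a Rel that pinned.const by (auto simp: unpinned_def)
    then show ?thesis using sat_a unfolding Rel sat_atom_Hrels_Rel by auto
  next
    case (Eq i j)
    have "atom_vars a \<subseteq> {..<n + K}" using fv a by (auto simp: fvars_def)
    then have "i < n + K" "j < n + K" using Eq by auto
    moreover have "pinned \<Phi> n i \<longleftrightarrow> pinned \<Phi> n j"
      using a Eq pinned.eq_left pinned.eq_right by blast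
    ultimately have "i \<in> ?U \<longleftrightarrow> j \<in> ?U" by (simp add: in_unpinned_iff)
    then show ?thesis using sat_a Eq by simp
  qed
qed

definition solutions :: "atom list \<Rightarrow> nat \<Rightarrow> nat list \<Rightarrow> nat list set" where
  "solutions \<Phi> K xs = {ys. length ys = K \<and> set ys \<subseteq> H7 \<and> sat Hrels (\<lambda>v. (xs @ ys) ! v) \<Phi>}"

definition base_solutions :: "atom list \<Rightarrow> nat \<Rightarrow> nat list \<Rightarrow> nat list set" where
  "base_solutions \<Phi> K xs =
     {ys \<in> solutions \<Phi> K xs. \<forall>v\<in>unpinned \<Phi> (length xs) K. (xs @ ys) ! v = 3}"

definition swap_unpinned :: "atom list \<Rightarrow> nat \<Rightarrow> nat list \<Rightarrow> nat list \<Rightarrow> nat list" where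
  "swap_unpinned \<Phi> K xs ys =
     map (\<lambda>k. if length xs + k \<in> unpinned \<Phi> (length xs) K then swap_pairs (ys ! k) else ys ! k)
       [0..<length ys]"

lemma length_swap_unpinned [simp]: "length (swap_unpinned \<Phi> K xs ys) = length ys"
  by (simp add: swap_unpinned_def)

lemma nth_append_swap_unpinned:
  assumes "v < length xs + length ys"
  shows "(xs @ swap_unpinned \<Phi> K xs ys) ! v =
    (if v \<in> unpinned \<Phi> (length xs) K then swap_pairs ((xs @ ys) ! v) else (xs @ ys) ! v)"
  using assms by (auto simp: swap_unpinned_def unpinned_def nth_append)

lemma swap_unpinned_swap_unpinned [simp]:
  "swap_unpinned \<Phi> K xs (swap_unpinned \<Phi> K xs ys) = ys"
  by (auto intro!: nth_equalityI simp: swap_unpinned_def)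

lemma set_swap_unpinned_subset_H7:
  "set ys \<subseteq> H7 \<Longrightarrow> set (swap_unpinned \<Phi> K xs ys) \<subseteq> H7"
  by (auto simp: swap_unpinned_def) (meson nth_mem subsetD)+

lemma swap_unpinned_in_solutions:
  assumes fv: "fvars \<Phi> \<subseteq> {..<length xs + K}" and ys: "ys \<in> solutions \<Phi> K xs"
  shows "swap_unpinned \<Phi> K xs ys \<in> solutions \<Phi> K xs"
proof -
  let ?\<sigma> = "\<lambda>v. (xs @ ys) ! v"
  have "sat Hrels (\<lambda>v. if v \<in> unpinned \<Phi> (length xs) K then swap_pairs (?\<sigma> v) else ?\<sigma> v) \<Phi>"
    using ys by (intro sat_swap_unpinned[OF fv]) (simp add: solutions_def)
  then have "sat Hrels (\<lambda>v. (xs @ swap_unpinned \<Phi> K xs ys) ! v) \<Phi>"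
    using fv ys by (subst sat_cong) (auto simp: nth_append_swap_unpinned solutions_def)
  then show ?thesis
    using ys by (simp add: solutions_def set_swap_unpinned_subset_H7)
qed

lemma swap_unpinned_eq_self_iff:
  assumes "ys \<in> solutions \<Phi> K xs"
  shows "swap_unpinned \<Phi> K xs ys = ys \<longleftrightarrow> ys \<in> base_solutions \<Phi> K xs"
proof -
  let ?U = "unpinned \<Phi> (length xs) K"
  have ys: "length ys = K" "\<And>k. k < K \<Longrightarrow> ys ! k \<in> H7"
    using assms by (auto simp: solutions_def)
  have "swap_unpinned \<Phi> K xs ys = ys \<longleftrightarrow> (\<forall>k<K. length xs + k \<in> ?U \<longrightarrow> ys ! k = 3)"
    using ys by (auto simp: swap_unpinned_def list_eq_iff_nth_eq swap_pairs_eq_self_iff)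
  also have "\<dots> \<longleftrightarrow> (\<forall>v\<in>?U. (xs @ ys) ! v = 3)"
  proof
    assume shifted: "\<forall>k<K. length xs + k \<in> ?U \<longrightarrow> ys ! k = 3"
    show "\<forall>v\<in>?U. (xs @ ys) ! v = 3"
    proof
      fix v assume "v \<in> ?U"
      then show "(xs @ ys) ! v = 3"
        using shifted[rule_format, of "v - length xs"] by (auto simp: unpinned_def nth_append)
    qed
  qed (metis nth_append_length_plus)
  finally show ?thesis using assms by (simp add: base_solutions_def)
qed

lemma base_solutions_unique:
  assumes "ys \<in> base_solutions \<Phi> K xs" "ys' \<in> base_solutions \<Phi> K xs"
  shows "ys = ys'"
proof (rule nth_equalityI)
  let ?\<sigma> = "\<lambda>v. (xs @ ys) ! v" and ?\<sigma>' = "\<lambda>v. (xs @ ys') ! v"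
  show "length ys = length ys'" using assms by (simp add: base_solutions_def solutions_def)
  fix k assume k: "k < length ys"
  then have "k < K" using assms by (simp add: base_solutions_def solutions_def)
  have "?\<sigma> (length xs + k) = ?\<sigma>' (length xs + k)"
  proof (cases "length xs + k \<in> unpinned \<Phi> (length xs) K")
    case True
    moreover have "\<forall>v\<in>unpinned \<Phi> (length xs) K. ?\<sigma> v = 3 \<and> ?\<sigma>' v = 3"
      using assms unfolding base_solutions_def by blast
    ultimately show ?thesis by metis
  next
    case False
    then have pin: "pinned \<Phi> (length xs) (length xs + k)" using \<open>k < K\<close> by (simp add: in_unpinned_iff)
    have sat: "sat Hrels ?\<sigma> \<Phi>" "sat Hrels ?\<sigma>' \<Phi>"
      using assms by (simp_all add: base_solutions_def solutions_def)
    have "\<forall>j<length xs. ?\<sigma> j = ?\<sigma>' j \<or> ?\<sigma> j = ?\<sigma>' j" by (simp add: nth_append)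
    from pinned_agree[OF pin sat(1) sat(2) sat(2) this] show ?thesis by (simp only: disj_absorb)
  qed
  then show "ys ! k = ys' ! k" by (simp add: nth_append)
qed

lemma finite_solutions: "finite (solutions \<Phi> K xs)"
  unfolding solutions_def by (rule finite_lists_length_eq_subset[OF finite_H7])

lemma odd_card_solutions_iff:
  assumes fv: "fvars \<Phi> \<subseteq> {..<length xs + K}"
  shows "odd (card (solutions \<Phi> K xs)) \<longleftrightarrow> base_solutions \<Phi> K xs \<noteq> {}"
proof -
  let ?S = "solutions \<Phi> K xs" and ?B = "base_solutions \<Phi> K xs"
  have moved: "{ys\<in>?S. swap_unpinned \<Phi> K xs ys \<noteq> ys} = ?S - ?B" and "?B \<subseteq> ?S"
    using swap_unpinned_eq_self_iff by (auto simp: base_solutions_def)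
  have "finite ?B" using \<open>?B \<subseteq> ?S\<close> finite_solutions by (rule finite_subset)
  then have card_S: "card ?S = card (?S - ?B) + card ?B"
    using card_Diff_subset[OF _ \<open>?B \<subseteq> ?S\<close>] card_mono[OF finite_solutions \<open>?B \<subseteq> ?S\<close>] by simp
  have "even (card (?S - ?B))"
    using even_card_moved_by_involution[OF finite_solutions[of \<Phi> K xs], where f = "swap_unpinned \<Phi> K xs"]
      swap_unpinned_in_solutions[OF fv] moved by simp
  then have "odd (card ?S) \<longleftrightarrow> odd (card ?B)" using card_S by simp
  moreover have "card ?B \<le> 1"
    using base_solutions_unique card_le_Suc0_iff_eq[OF \<open>finite ?B\<close>] by auto
  then have "odd (card ?B) \<longleftrightarrow> ?B \<noteq> {}"
    using \<open>finite ?B\<close> by (cases "card ?B") (auto simp: card_eq_0_iff)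
  ultimately show ?thesis by simp
qed

lemma clone2_H7_Hrels_base_solutions:
  assumes "clone2 H7 Hrels n S"
  obtains \<Phi> K where "fvars \<Phi> \<subseteq> {..<n + K}"
    and "S = {xs. length xs = n \<and> set xs \<subseteq> H7 \<and> base_solutions \<Phi> K xs \<noteq> {}}"
proof -
  obtain \<Phi> ks where fv: "fvars \<Phi> \<subseteq> {..<n + sum_list ks}"
    and S: "S = {xs. length xs = n \<and> set xs \<subseteq> H7 \<and> peval H7 Hrels \<Phi> ks xs}"
    using assms unfolding clone2_def by blast
  have "peval H7 Hrels \<Phi> ks xs \<longleftrightarrow> base_solutions \<Phi> (sum_list ks) xs \<noteq> {}" if "length xs = n" for xs
  proof -
    have "peval H7 Hrels \<Phi> ks xs \<longleftrightarrow> odd (card (solutions \<Phi> (sum_list ks) xs))"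
      by (simp add: peval_iff_odd_card_sat[OF finite_H7] solutions_def)
    also have "\<dots> \<longleftrightarrow> base_solutions \<Phi> (sum_list ks) xs \<noteq> {}"
      using fv that by (simp add: odd_card_solutions_iff)
    finally show ?thesis .
  qed
  then show thesis using that[OF fv] S by blast
qed

lemma fourth_corner_base_solutions:
  assumes fv: "fvars \<Phi> \<subseteq> {..<n + K}"
    and len: "length xs = n" "length xs' = n" "length xs'' = n"
    and agree: "\<forall>j<n. xs ! j = xs' ! j \<or> xs ! j = xs'' ! j"
    and ys: "ys \<in> base_solutions \<Phi> K xs" "ys' \<in> base_solutions \<Phi> K xs'" "ys'' \<in> base_solutions \<Phi> K xs''"
  shows "fourth_corner_list ys ys' ys'' \<in> base_solutions \<Phi> K (fourth_corner_list xs xs' xs'')"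
proof -
  let ?\<sigma> = "\<lambda>v. (xs @ ys) ! v" and ?\<sigma>' = "\<lambda>v. (xs' @ ys') ! v" and ?\<sigma>'' = "\<lambda>v. (xs'' @ ys'') ! v"
  let ?U = "unpinned \<Phi> n K"
  have len_ys: "length ys = K" "length ys' = K" "length ys'' = K"
    and sat: "sat Hrels ?\<sigma> \<Phi>" "sat Hrels ?\<sigma>' \<Phi>" "sat Hrels ?\<sigma>'' \<Phi>"
    and H7: "set ys' \<subseteq> H7" "set ys'' \<subseteq> H7"
    and base: "\<forall>v\<in>?U. ?\<sigma> v = 3 \<and> ?\<sigma>' v = 3 \<and> ?\<sigma>'' v = 3"
    using ys len by (auto simp: base_solutions_def solutions_def)
  have free: "\<forall>j<n. ?\<sigma> j = ?\<sigma>' j \<or> ?\<sigma> j = ?\<sigma>'' j"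
    using agree len by (simp add: nth_append)
  have "?\<sigma> v = ?\<sigma>' v \<or> ?\<sigma> v = ?\<sigma>'' v" if "v < n + K" for v
  proof (cases "v \<in> ?U")
    case True
    then show ?thesis using base by simp
  next
    case False
    then have "pinned \<Phi> n v" using that by (simp add: in_unpinned_iff)
    then show ?thesis using pinned_agree[OF _ sat free] by blast
  qed
  then have "sat Hrels (\<lambda>v. fourth_corner (?\<sigma> v) (?\<sigma>' v) (?\<sigma>'' v)) \<Phi>"
    using fv by (intro sat_fourth_corner[OF fourth_corner_closed_Hrels sat]) auto
  moreover have corner: "fourth_corner_list xs xs' xs'' @ fourth_corner_list ys ys' ys''
      = fourth_corner_list (xs @ ys) (xs' @ ys') (xs'' @ ys'')"
    using len len_ys by (simp add: fourth_corner_list_append)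
  ultimately have "sat Hrels (\<lambda>v. (fourth_corner_list xs xs' xs'' @ fourth_corner_list ys ys' ys'') ! v) \<Phi>"
    using fv len len_ys by (subst sat_cong[where \<sigma>' = "\<lambda>v. fourth_corner (?\<sigma> v) (?\<sigma>' v) (?\<sigma>'' v)"])
      (auto simp: corner)
  moreover have "set (fourth_corner_list ys ys' ys'') \<subseteq> H7"
    using set_fourth_corner_list[of ys' ys ys''] len_ys H7 by auto
  moreover have "\<forall>v\<in>?U. (fourth_corner_list xs xs' xs'' @ fourth_corner_list ys ys' ys'') ! v = 3"
    using base len len_ys by (auto simp: corner unpinned_def fourth_corner_def)
  ultimately show ?thesis
    using len len_ys by (simp add: base_solutions_def solutions_def)
qed

lemma strongly_2_rectangular_H7_Hrels: "strongly_2_rectangular H7 Hrels"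
  unfolding strongly_2_rectangular_def
proof (intro allI impI)
  fix n S assume "clone2 H7 Hrels n S"
  then obtain \<Phi> K where fv: "fvars \<Phi> \<subseteq> {..<n + K}"
    and S: "S = {xs. length xs = n \<and> set xs \<subseteq> H7 \<and> base_solutions \<Phi> K xs \<noteq> {}}"
    by (rule clone2_H7_Hrels_base_solutions)
  have "fourth_corner_closed S"
    unfolding fourth_corner_closed_def
  proof (intro ballI impI)
    fix xs xs' xs'' assume "xs \<in> S" "xs' \<in> S" "xs'' \<in> S"
      and len: "length xs' = length xs" "length xs'' = length xs"
      and agree: "\<forall>j<length xs. xs ! j = xs' ! j \<or> xs ! j = xs'' ! j"
    then obtain ys ys' ys'' where "length xs = n" "set xs' \<subseteq> H7" "set xs'' \<subseteq> H7"
      and ys: "ys \<in> base_solutions \<Phi> K xs" "ys' \<in> base_solutions \<Phi> K xs'"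
        "ys'' \<in> base_solutions \<Phi> K xs''"
      using S by blast
    moreover have "set (fourth_corner_list xs xs' xs'') \<subseteq> set xs' \<union> set xs''"
      using len by (rule set_fourth_corner_list)
    moreover have "fourth_corner_list ys ys' ys'' \<in> base_solutions \<Phi> K (fourth_corner_list xs xs' xs'')"
      using fourth_corner_base_solutions[OF fv _ _ _ _ ys] len agree \<open>length xs = n\<close> by simp
    ultimately show "fourth_corner_list xs xs' xs'' \<in> S"
      using S by auto
  qed
  then show "rectangular n S" by (rule rectangular_if_fourth_corner_closed)
qed

lemma Rp_Qp_between_1_6: "{c. (1, c) \<in> Rp \<and> (c, 6) \<in> Qp} = {3 :: nat}"
  by (auto simp: Rp_def Qp_def)

lemma Qp_Rp_between_1_6: "{c. (1, c) \<in> Qp \<and> (c, 6) \<in> Rp} = {4, 5 :: nat}"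
  by (auto simp: Rp_def Qp_def)

theorem mainTheorem15:
  shows "rigid2 H7 Hrels \<and> strongly_2_rectangular H7 Hrels \<and> \<not> cong_2_permutable H7 Hrels
         \<and> (1, 6) \<in> comp2 Rp Qp \<and> (1, 6) \<notin> comp2 Qp Rp"
proof -
  have RQ: "(1, 6) \<in> comp2 Rp Qp" using Rp_Qp_between_1_6 by (simp add: comp2_def)
  have QR: "(1, 6) \<notin> comp2 Qp Rp" using Qp_Rp_between_1_6 by (simp add: comp2_def)
  have "\<not> cong_2_permutable H7 Hrels"
    using equiv_H7_Rp equiv_H7_Qp RQ QR
    by (intro not_cong_2_permutable_if_comp2[of 0 Hrels Rp H7 1 Qp]) (simp_all add: Hrels_def)
  moreover have "rigid2 H7 Hrels" by (rule rigid2_if_constants[OF constant_in_Hrels])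
  ultimately show ?thesis using strongly_2_rectangular_H7_Hrels RQ QR by blast
qed

end
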